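(* Let $f,g$ satisfy the standing assumptions below, fix $\hat\beta>0$, and suppose $\beta\ge\frac{2Q_gM_f}{\mu^3}$. Then for any $(x,y)\in\mathbb{R}^n\times\mathbb{R}^p$, $0\in\mathcal{D}_h(x,y)$ if and only if $0\in\hat{\mathcal{D}}_s(x,y)$.
   Context: Standing assumptions. (A1) Constants $M_f,\mu,L_g,Q_g>0$ exist such that: $f:\mathbb{R}^n\times\mathbb{R}^p\to\mathbb{R}$ is $M_f$-Lipschitz; $g$ is twice differentiable with $\nabla^2_{yy}g\succeq\mu I_p$; $\nabla g$ is $L_g$-Lipschitz; $\nabla^2_{yy}g,\nabla^2_{xy}g$ are $Q_g$-Lipschitz; $\nabla^2_{yy}g$ is continuously differentiable ($\nabla^2_{xy}g\in\mathbb{R}^{n\times p}$ has entries $\partial^2g/\partial x_i\partial y_j$). (A2) $f$ is a potential function of a conservative field $\mathcal{D}_f$ with compact convex values of norm at most $M_f$. Notation (all at $(x,y)$): $H=\nabla^2_{yy}g$; $\mathcal{A}(x,y):=y-H^{-1}\nabla_yg$; $\nabla^3_{xyy}g(x,y)[d]:=\lim_{t\to0}\frac1t(\nabla^2_{xy}g(x,y+td)-\nabla^2_{xy}g(x,y))$, $\nabla^3_{yyy}g(x,y)[d]:=\lim_{t\to0}\frac1t(\nabla^2_{yy}g(x,y+td)-\nabla^2_{yy}g(x,y))$; $J_{A,x}:=-\nabla^2_{xy}gH^{-1}+\nabla^3_{xyy}g[H^{-1}\nabla_yg]H^{-1}$, $J_{A,y}:=\nabla^3_{yyy}g[H^{-1}\nabla_yg]H^{-1}$;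 $\mathcal{D}_h(x,y):=\{(d_x+J_{A,x}d_y+\beta\nabla^2_{xy}g\nabla_yg,\ J_{A,y}d_y+\beta H\nabla_yg):(d_x,d_y)\in\mathcal{D}_f(x,\mathcal{A}(x,y))\}$; $\hat{\mathcal{D}}_s(x,y):=\{(d_x-\nabla^2_{xy}gH^{-1}d_y,\ \hat\beta\nabla_yg):(d_x,d_y)\in\mathcal{D}_f(x,\mathcal{A}(x,y))\}$. *)

theory Defs
  imports "HOL-Analysis.Analysis"
begin

definition abs_cont_curve :: "(real \<Rightarrow> 'a::real_normed_vector) \<Rightarrow> bool" where
  "abs_cont_curve \<gamma> \<longleftrightarrow>
     (\<forall>\<epsilon>>0. \<exists>\<delta>>0. \<forall>(n::nat) (a::nat \<Rightarrow> real) (b::nat \<Rightarrow> real).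
        (\<forall>i<n. 0 \<le> a i \<and> a i \<le> b i \<and> b i \<le> 1) \<and>
        (\<forall>i<n. \<forall>j<n. i \<noteq> j \<longrightarrow> b i \<le> a j \<or> b j \<le> a i) \<and>
        (\<Sum>i<n. b i - a i) < \<delta>
        \<longrightarrow> (\<Sum>i<n. norm (\<gamma> (b i) - \<gamma> (a i))) < \<epsilon>)"

definition field_path_integral :: "('a::euclidean_space \<Rightarrow> 'a set) \<Rightarrow> (real \<Rightarrow> 'a) \<Rightarrow> real" where
  "field_path_integral D \<gamma> =
     integral\<^sup>L (lebesgue_on {0..1})
       (\<lambda>t. Sup ((\<lambda>v. inner (vector_derivative \<gamma> (at t within {0..1})) v) ` D (\<gamma> t)))"

definition conservative_field :: "('a::euclidean_space \<Rightarrow> 'a set) \<Rightarrow> bool" where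
  "conservative_field D \<longleftrightarrow>
     closed {(z, v). v \<in> D z} \<and>
     (\<forall>z. D z \<noteq> {} \<and> compact (D z)) \<and>
     (\<forall>\<gamma>. abs_cont_curve \<gamma> \<and> \<gamma> 0 = \<gamma> 1 \<longrightarrow> field_path_integral D \<gamma> = 0)"

definition potential_of :: "('a::euclidean_space \<Rightarrow> real) \<Rightarrow> ('a \<Rightarrow> 'a set) \<Rightarrow> bool" where
  "potential_of f D \<longleftrightarrow> conservative_field D \<and>
     (\<forall>\<gamma>. abs_cont_curve \<gamma> \<longrightarrow> f (\<gamma> 1) = f (\<gamma> 0) + field_path_integral D \<gamma>)"

definition nabla3_xyy :: "('x \<Rightarrow> 'y::real_vector \<Rightarrow> 'm::real_normed_vector) \<Rightarrow> 'x \<Rightarrow> 'y \<Rightarrow> 'y \<Rightarrow> 'm" where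
  "nabla3_xyy Hxy x y d = Lim (at 0) (\<lambda>t::real. (1 / t) *\<^sub>R (Hxy x (y + t *\<^sub>R d) - Hxy x y))"

definition nabla3_yyy :: "('x \<Rightarrow> 'y::real_vector \<Rightarrow> 'm::real_normed_vector) \<Rightarrow> 'x \<Rightarrow> 'y \<Rightarrow> 'y \<Rightarrow> 'm" where
  "nabla3_yyy Hyy x y d = Lim (at 0) (\<lambda>t::real. (1 / t) *\<^sub>R (Hyy x (y + t *\<^sub>R d) - Hyy x y))"

definition A_map :: "(real^'n \<Rightarrow> real^'p \<Rightarrow> real^'p) \<Rightarrow> (real^'n \<Rightarrow> real^'p \<Rightarrow> real^'p^'p)
    \<Rightarrow> real^'n \<Rightarrow> real^'p \<Rightarrow> real^'p" where
  "A_map gy Hyy x y = y - matrix_inv (Hyy x y) *v gy x y"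

definition J_Ax :: "(real^'n \<Rightarrow> real^'p \<Rightarrow> real^'p) \<Rightarrow> (real^'n \<Rightarrow> real^'p \<Rightarrow> real^'p^'p)
    \<Rightarrow> (real^'n \<Rightarrow> real^'p \<Rightarrow> real^'p^'n) \<Rightarrow> real^'n \<Rightarrow> real^'p \<Rightarrow> real^'p^'n" where
  "J_Ax gy Hyy Hxy x y =
     - (Hxy x y ** matrix_inv (Hyy x y))
     + nabla3_xyy Hxy x y (matrix_inv (Hyy x y) *v gy x y) ** matrix_inv (Hyy x y)"

definition J_Ay :: "(real^'n \<Rightarrow> real^'p \<Rightarrow> real^'p) \<Rightarrow> (real^'n \<Rightarrow> real^'p \<Rightarrow> real^'p^'p)
    \<Rightarrow> real^'n \<Rightarrow> real^'p \<Rightarrow> real^'p^'p" where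
  "J_Ay gy Hyy x y =
     nabla3_yyy Hyy x y (matrix_inv (Hyy x y) *v gy x y) ** matrix_inv (Hyy x y)"

definition D_h :: "((real^'n) \<times> (real^'p) \<Rightarrow> ((real^'n) \<times> (real^'p)) set)
    \<Rightarrow> (real^'n \<Rightarrow> real^'p \<Rightarrow> real^'p) \<Rightarrow> (real^'n \<Rightarrow> real^'p \<Rightarrow> real^'p^'p)
    \<Rightarrow> (real^'n \<Rightarrow> real^'p \<Rightarrow> real^'p^'n) \<Rightarrow> real \<Rightarrow> real^'n \<Rightarrow> real^'p
    \<Rightarrow> ((real^'n) \<times> (real^'p)) set" where
  "D_h Df gy Hyy Hxy \<beta> x y =
     {(dx + J_Ax gy Hyy Hxy x y *v dy + \<beta> *\<^sub>R (Hxy x y *v gy x y),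
       J_Ay gy Hyy x y *v dy + \<beta> *\<^sub>R (Hyy x y *v gy x y)) | dx dy.
        (dx, dy) \<in> Df (x, A_map gy Hyy x y)}"

definition D_s_hat :: "((real^'n) \<times> (real^'p) \<Rightarrow> ((real^'n) \<times> (real^'p)) set)
    \<Rightarrow> (real^'n \<Rightarrow> real^'p \<Rightarrow> real^'p) \<Rightarrow> (real^'n \<Rightarrow> real^'p \<Rightarrow> real^'p^'p)
    \<Rightarrow> (real^'n \<Rightarrow> real^'p \<Rightarrow> real^'p^'n) \<Rightarrow> real \<Rightarrow> real^'n \<Rightarrow> real^'p
    \<Rightarrow> ((real^'n) \<times> (real^'p)) set" where
  "D_s_hat Df gy Hyy Hxy \<beta>h x y =
     {(dx - (Hxy x y ** matrix_inv (Hyy x y)) *v dy, \<beta>h *\<^sub>R gy x y) | dx dy.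
        (dx, dy) \<in> Df (x, A_map gy Hyy x y)}"

end

theory Submission
  imports Defs
begin

text \<open>If \<open>0 \<in> D_h\<close>, its second component says \<open>J_{A,y} d_y = -\<beta> H \<nabla>_y g\<close>.
  Strong convexity gives \<open>|H \<nabla>_y g| \<ge> \<mu> |\<nabla>_y g|\<close>, while the \<open>Q_g\<close>-Lipschitz Hessian
  and \<open>|d_y| \<le> M_f\<close> give \<open>|J_{A,y} d_y| \<le> Q_g M_f |\<nabla>_y g| / \<mu>\<^sup>2\<close>; since
  \<open>\<beta> \<mu> \<ge> 2 Q_g M_f / \<mu>\<^sup>2\<close> this forces \<open>\<nabla>_y g = 0\<close>. If \<open>0 \<in> D_s_hat\<close>, then
  \<open>\<nabla>_y g = 0\<close> because \<open>\<beta>h > 0\<close>. Finally, where \<open>\<nabla>_y g = 0\<close> the third-derivative terms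
  vanish, \<open>J_{A,x} = -\<nabla>\<^sup>2_{xy} g H\<^sup>-\<^sup>1\<close>, \<open>J_{A,y} = 0\<close>, and the two sets coincide.\<close>

lemma matrix_inv_right:
  fixes A :: "'a::semiring_1^'n^'n"
  assumes "invertible A"
  shows "A ** matrix_inv A = mat 1"
  using someI_ex[OF assms[unfolded invertible_def]] by (simp add: matrix_inv_def)

lemma strongly_positive_matrix_norm_ge:
  fixes H :: "real^'n^'n"
  assumes "\<And>v. \<mu> * inner v v \<le> inner v (H *v v)"
  shows "\<mu> * norm v \<le> norm (H *v v)"
proof -
  have "norm v * (\<mu> * norm v) \<le> inner v (H *v v)"
    using assms[of v] by (simp add: mult_ac flip: power2_eq_square power2_norm_eq_inner)
  also have "\<dots> \<le> norm v * norm (H *v v)"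
    by (rule norm_cauchy_schwarz)
  finally show ?thesis
    by (cases "v = 0") auto
qed

lemma strongly_positive_matrix_invertible:
  fixes H :: "real^'n^'n"
  assumes "\<mu> > 0" and "\<And>v. \<mu> * inner v v \<le> inner v (H *v v)"
  shows "invertible H"
proof -
  have "H *v v = 0 \<Longrightarrow> v = 0" for v
    using strongly_positive_matrix_norm_ge[OF assms(2), of v] \<open>\<mu> > 0\<close>
    by (simp add: mult_le_0_iff)
  then show ?thesis
    by (auto simp: invertible_left_inverse matrix_left_invertible_ker)
qed

lemma strongly_positive_matrix_inv_norm_le:
  fixes H :: "real^'n^'n"
  assumes "\<mu> > 0" and "\<And>v. \<mu> * inner v v \<le> inner v (H *v v)"
  shows "norm (matrix_inv H *v u) \<le> norm u / \<mu>"
proof -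
  have "H *v (matrix_inv H *v u) = u"
    by (simp add: matrix_vector_mul_assoc matrix_inv_right strongly_positive_matrix_invertible[OF assms])
  then show ?thesis
    using strongly_positive_matrix_norm_ge[OF assms(2), of "matrix_inv H *v u"] \<open>\<mu> > 0\<close>
    by (simp add: field_simps)
qed

lemma tendsto_difference_quotient_at_0:
  fixes \<phi> :: "real \<Rightarrow> 'a::real_normed_vector"
  assumes "(\<phi> has_vector_derivative L) (at 0)"
  shows "((\<lambda>t. (1 / t) *\<^sub>R (\<phi> t - \<phi> 0)) \<longlongrightarrow> L) (at 0)"
proof -
  have "((\<lambda>t. (\<phi> t - \<phi> 0 - t *\<^sub>R L) /\<^sub>R norm t) \<longlongrightarrow> 0) (at 0)"
    using assms by (simp add: has_vector_derivative_def has_derivative_at_within)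
  then have "((\<lambda>t. norm ((\<phi> t - \<phi> 0 - t *\<^sub>R L) /\<^sub>R norm t)) \<longlongrightarrow> 0) (at 0)"
    by (rule tendsto_norm_zero)
  moreover have "norm ((\<phi> t - \<phi> 0 - t *\<^sub>R L) /\<^sub>R norm t) = norm ((1 / t) *\<^sub>R (\<phi> t - \<phi> 0) - L)"
    if "t \<noteq> 0" for t
  proof -
    have "(1 / t) *\<^sub>R (\<phi> t - \<phi> 0) - L = (1 / t) *\<^sub>R (\<phi> t - \<phi> 0 - t *\<^sub>R L)"
      using that by (simp add: algebra_simps)
    then show ?thesis by (simp add: divide_inverse)
  qed
  ultimately have "((\<lambda>t. norm ((1 / t) *\<^sub>R (\<phi> t - \<phi> 0) - L)) \<longlongrightarrow> 0) (at 0)"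
    by (simp add: Lim_transform_eventually eventually_at_filter)
  then show ?thesis
    by (simp add: tendsto_norm_zero_iff Lim_null[symmetric])
qed

lemma tendsto_directional_difference_quotient:
  assumes "(F has_derivative F') (at z)"
  shows "((\<lambda>t. (1 / t) *\<^sub>R (F (z + t *\<^sub>R d) - F z)) \<longlongrightarrow> F' d) (at 0)"
proof -
  have "((\<lambda>t. z + t *\<^sub>R d) has_derivative (\<lambda>t. t *\<^sub>R d)) (at 0)"
    by (auto intro!: derivative_eq_intros)
  from diff_chain_at[OF this, of F F'] assms
  have "((\<lambda>t. F (z + t *\<^sub>R d)) has_derivative (\<lambda>t. t *\<^sub>R F' d)) (at 0)"
    by (simp add: o_def linear_scale[OF has_derivative_linear[OF assms]])
  then have "((\<lambda>t. F (z + t *\<^sub>R d)) has_vector_derivative F' d) (at 0)"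
    by (simp add: has_vector_derivative_def)
  from tendsto_difference_quotient_at_0[OF this] show ?thesis by simp
qed

lemma nabla3_yyy_matrix_vector_bound:
  fixes Hyy :: "'x::real_normed_vector \<Rightarrow> 'y::real_normed_vector \<Rightarrow> real^'q^'m"
  assumes diff: "(\<lambda>(u, v). Hyy u v) differentiable (at (x, y))"
    and lip: "\<And>y'. onorm (\<lambda>v. (Hyy x y' - Hyy x y) *v v) \<le> Q * norm (y' - y)"
  shows "norm (nabla3_yyy Hyy x y w *v v) \<le> Q * norm w * norm v"
proof -
  define q where "q = (\<lambda>t::real. (1 / t) *\<^sub>R (Hyy x (y + t *\<^sub>R w) - Hyy x y))"
  obtain D where "((\<lambda>(u, v). Hyy u v) has_derivative D) (at (x, y))"
    using diff by (auto simp: differentiable_def)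
  from tendsto_directional_difference_quotient[OF this, of "(0, w)"]
  have lim: "(q \<longlongrightarrow> D (0, w)) (at 0)"
    by (simp add: q_def)
  then have "nabla3_yyy Hyy x y w = D (0, w)"
    unfolding nabla3_yyy_def q_def[symmetric] by (rule tendsto_Lim[rotated]) simp
  moreover have "bounded_linear (\<lambda>A::real^'q^'m. A *v v)"
    by (auto intro!: linearI simp: linear_conv_bounded_linear[symmetric] algebra_simps
        scaleR_matrix_vector_assoc)
  from bounded_linear.tendsto[OF this lim]
  have "((\<lambda>t. q t *v v) \<longlongrightarrow> D (0, w) *v v) (at 0)" .
  moreover have "norm (q t *v v) \<le> Q * norm w * norm v" if "t \<noteq> 0" for t
  proof -
    have "norm ((Hyy x (y + t *\<^sub>R w) - Hyy x y) *v v)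
        \<le> onorm (\<lambda>v. (Hyy x (y + t *\<^sub>R w) - Hyy x y) *v v) * norm v"
      by (rule onorm) simp
    also have "\<dots> \<le> Q * (\<bar>t\<bar> * norm w) * norm v"
      using lip[of "y + t *\<^sub>R w"] by (simp add: mult_right_mono)
    finally show ?thesis
      using that by (simp add: q_def flip: scaleR_matrix_vector_assoc) (simp add: divide_le_eq mult_ac)
  qed
  ultimately show ?thesis
    by (intro Lim_norm_ubound[OF trivial_limit_at]) (auto simp: eventually_at_filter)
qed

lemma nabla3_xyy_zero_direction [simp]: "nabla3_xyy Hxy x y 0 = 0"
  unfolding nabla3_xyy_def by (rule tendsto_Lim) simp_all

lemma nabla3_yyy_zero_direction [simp]: "nabla3_yyy Hyy x y 0 = 0"
  unfolding nabla3_yyy_def by (rule tendsto_Lim) simp_all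

lemma D_h_eq_D_s_hat_if_gradient_zero:
  assumes "gy x y = 0"
  shows "D_h Df gy Hyy Hxy \<beta> x y = D_s_hat Df gy Hyy Hxy \<beta>h x y"
proof -
  have "J_Ax gy Hyy Hxy x y *v d = - ((Hxy x y ** matrix_inv (Hyy x y)) *v d)" for d
    using assms by (simp add: J_Ax_def matrix_vector_mult_diff_rdistrib[of 0, simplified])
  moreover have "J_Ay gy Hyy x y = 0"
    using assms by (simp add: J_Ay_def)
  ultimately show ?thesis
    using assms by (simp add: D_h_def D_s_hat_def)
qed

lemma gradient_zero_if_zero_in_D_s_hat:
  assumes "\<beta>h \<noteq> 0" and "0 \<in> D_s_hat Df gy Hyy Hxy \<beta>h x y"
  shows "gy x y = 0"
  using assms by (auto simp: D_s_hat_def zero_prod_def)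

lemma J_Ay_norm_le:
  fixes Hyy :: "real^'n \<Rightarrow> real^'p \<Rightarrow> real^'p^'p"
  assumes "\<mu> > 0" "Q \<ge> 0"
    and strong_cvx: "\<And>v. \<mu> * inner v v \<le> inner v (Hyy x y *v v)"
    and Hyy_diff: "(\<lambda>(u, v). Hyy u v) differentiable (at (x, y))"
    and Hyy_lip: "\<And>y'. onorm (\<lambda>v. (Hyy x y' - Hyy x y) *v v) \<le> Q * norm (y' - y)"
  shows "norm (J_Ay gy Hyy x y *v d) \<le> Q / \<mu>\<^sup>2 * norm (gy x y) * norm d"
proof -
  define Hi where "Hi = matrix_inv (Hyy x y)"
  have "norm (J_Ay gy Hyy x y *v d) = norm (nabla3_yyy Hyy x y (Hi *v gy x y) *v (Hi *v d))"
    by (simp add: J_Ay_def Hi_def matrix_vector_mul_assoc)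
  also have "\<dots> \<le> Q * norm (Hi *v gy x y) * norm (Hi *v d)"
    by (rule nabla3_yyy_matrix_vector_bound[OF Hyy_diff Hyy_lip])
  also have "\<dots> \<le> Q * (norm (gy x y) / \<mu>) * (norm d / \<mu>)"
    using strongly_positive_matrix_inv_norm_le[OF \<open>\<mu> > 0\<close> strong_cvx] \<open>\<mu> > 0\<close> \<open>Q \<ge> 0\<close>
    by (intro mult_mono mult_left_mono) (auto simp: Hi_def)
  finally show ?thesis
    by (simp add: power2_eq_square)
qed

lemma gradient_zero_if_zero_in_D_h:
  fixes Hyy :: "real^'n \<Rightarrow> real^'p \<Rightarrow> real^'p^'p"
  assumes pos: "\<mu> > 0" "Q > 0" "M > 0"
    and strong_cvx: "\<And>v. \<mu> * inner v v \<le> inner v (Hyy x y *v v)"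
    and Hyy_diff: "(\<lambda>(u, v). Hyy u v) differentiable (at (x, y))"
    and Hyy_lip: "\<And>y'. onorm (\<lambda>v. (Hyy x y' - Hyy x y) *v v) \<le> Q * norm (y' - y)"
    and Df_bound: "\<And>d. d \<in> Df (x, A_map gy Hyy x y) \<Longrightarrow> norm d \<le> M"
    and beta_bound: "\<beta> \<ge> 2 * Q * M / \<mu> ^ 3"
    and zero_in: "0 \<in> D_h Df gy Hyy Hxy \<beta> x y"
  shows "gy x y = 0"
proof -
  define g c where "g = gy x y" and "c = Q / \<mu>\<^sup>2 * M"
  obtain dx dy where "(dx, dy) \<in> Df (x, A_map gy Hyy x y)"
    and y_part: "J_Ay gy Hyy x y *v dy + \<beta> *\<^sub>R (Hyy x y *v g) = 0"
    using zero_in by (auto simp: D_h_def zero_prod_def g_def)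
  then have "norm dy \<le> M"
    using Df_bound norm_snd_le[of dy dx] by force
  have "2 * Q * M / \<mu> ^ 3 > 0"
    using pos by simp
  with beta_bound have "\<beta> \<ge> 0"
    by linarith
  have "\<beta> * (\<mu> * norm g) \<le> norm (\<beta> *\<^sub>R (Hyy x y *v g))"
    using strongly_positive_matrix_norm_ge[OF strong_cvx, of g] \<open>\<beta> \<ge> 0\<close>
    by (simp add: mult_left_mono)
  also have "\<dots> = norm (J_Ay gy Hyy x y *v dy)"
    using y_part by (metis add.commute eq_neg_iff_add_eq_0 norm_minus_cancel)
  also have "\<dots> \<le> Q / \<mu>\<^sup>2 * norm g * norm dy"
    unfolding g_def using pos by (intro J_Ay_norm_le[OF _ _ strong_cvx Hyy_diff Hyy_lip]) auto
  also have "\<dots> \<le> Q / \<mu>\<^sup>2 * norm g * M"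
    using \<open>norm dy \<le> M\<close> pos by (intro mult_left_mono) auto
  finally have upper: "\<beta> * \<mu> * norm g \<le> c * norm g"
    by (simp add: c_def mult_ac)
  have "2 * c \<le> \<beta> * \<mu>"
    using mult_right_mono[OF beta_bound, of \<mu>] pos by (simp add: c_def power2_eq_square power3_eq_cube)
  then have "2 * c * norm g \<le> \<beta> * \<mu> * norm g"
    by (rule mult_right_mono) simp
  with upper have "c * norm g \<le> 0"
    by linarith
  moreover have "c > 0"
    using pos by (simp add: c_def)
  ultimately show ?thesis
    by (simp add: g_def mult_le_0_iff)
qed

theorem proposition4p5:
  fixes f g :: "real^'n \<Rightarrow> real^'p \<Rightarrow> real"
    and gx :: "real^'n \<Rightarrow> real^'p \<Rightarrow> real^'n"
    and gy :: "real^'n \<Rightarrow> real^'p \<Rightarrow> real^'p"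
    and Hyy :: "real^'n \<Rightarrow> real^'p \<Rightarrow> real^'p^'p"
    and Hxy :: "real^'n \<Rightarrow> real^'p \<Rightarrow> real^'p^'n"
    and Df :: "(real^'n) \<times> (real^'p) \<Rightarrow> ((real^'n) \<times> (real^'p)) set"
    and M\<^sub>f \<mu> L\<^sub>g Q\<^sub>g \<beta> \<beta>h :: real
    and x :: "real^'n" and y :: "real^'p"
  assumes consts_pos: "M\<^sub>f > 0" "\<mu> > 0" "L\<^sub>g > 0" "Q\<^sub>g > 0"
    \<comment> \<open>(A1) f is M_f-Lipschitz\<close>
    and f_lip: "M\<^sub>f-lipschitz_on UNIV (\<lambda>(x, y). f x y)"
    \<comment> \<open>(A1) g is twice differentiable: gradient (gx, gy), Hessian blocks Hyy, Hxy\<close>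
    and g_grad: "\<And>x y. ((\<lambda>(u, v). g u v) has_derivative
                   (\<lambda>(du, dv). inner (gx x y) du + inner (gy x y) dv)) (at (x, y))"
    and gx_diff: "\<And>x y. (\<lambda>(u, v). gx u v) differentiable (at (x, y))"
    and gy_hess: "\<And>x y. ((\<lambda>(u, v). gy u v) has_derivative
                   (\<lambda>(du, dv). transpose (Hxy x y) *v du + Hyy x y *v dv)) (at (x, y))"
    \<comment> \<open>(A1) strong convexity in y\<close>
    and strong_cvx: "\<And>x y v. \<mu> * inner v v \<le> inner v (Hyy x y *v v)"
    \<comment> \<open>(A1) gradient of g is L_g-Lipschitz\<close>
    and grad_lip: "L\<^sub>g-lipschitz_on UNIV (\<lambda>(x, y). (gx x y, gy x y))"
    \<comment> \<open>(A1) Hessian blocks are Q_g-Lipschitz (operator norm)\<close>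
    and Hyy_lip: "\<And>x y x' y'. onorm (\<lambda>v. (Hyy x y - Hyy x' y') *v v) \<le> Q\<^sub>g * dist (x, y) (x', y')"
    and Hxy_lip: "\<And>x y x' y'. onorm (\<lambda>v. (Hxy x y - Hxy x' y') *v v) \<le> Q\<^sub>g * dist (x, y) (x', y')"
    \<comment> \<open>(A1) Hyy is continuously differentiable\<close>
    and Hyy_C1: "\<exists>D. (\<forall>z. ((\<lambda>(u, v). Hyy u v) has_derivative blinfun_apply (D z)) (at z))
                     \<and> continuous_on UNIV D"
    \<comment> \<open>(A2) f is a potential of a conservative field with compact convex values bounded by M_f\<close>
    and f_pot: "potential_of (\<lambda>(x, y). f x y) Df"
    and Df_vals: "\<And>z. compact (Df z) \<and> convex (Df z) \<and> (\<forall>d\<in>Df z. norm d \<le> M\<^sub>f)"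
    and beta_hat_pos: "\<beta>h > 0"
    and beta_bound: "\<beta> \<ge> 2 * Q\<^sub>g * M\<^sub>f / \<mu> ^ 3"
  shows "(0 \<in> D_h Df gy Hyy Hxy \<beta> x y) \<longleftrightarrow> (0 \<in> D_s_hat Df gy Hyy Hxy \<beta>h x y)"
proof -
  have Hyy_diff: "(\<lambda>(u, v). Hyy u v) differentiable (at (x, y))"
    using Hyy_C1 by (auto simp: differentiable_def)
  have Hyy_lip_y: "onorm (\<lambda>v. (Hyy x y' - Hyy x y) *v v) \<le> Q\<^sub>g * norm (y' - y)" for y'
    using Hyy_lip[of x y' x y] by (simp add: dist_Pair_Pair dist_norm)
  have Df_bound: "norm d \<le> M\<^sub>f" if "d \<in> Df z" for d z
    using Df_vals that by blast
  have "gy x y = 0" if "0 \<in> D_h Df gy Hyy Hxy \<beta> x y"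
    using gradient_zero_if_zero_in_D_h[OF consts_pos(2,4,1) strong_cvx Hyy_diff Hyy_lip_y
        Df_bound beta_bound that] .
  moreover have "gy x y = 0" if "0 \<in> D_s_hat Df gy Hyy Hxy \<beta>h x y"
    using gradient_zero_if_zero_in_D_s_hat[OF _ that] beta_hat_pos by simp
  ultimately show ?thesis
    using D_h_eq_D_s_hat_if_gradient_zero by metis
qed

end
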